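(* $\mathbf{Ex}\equiv^{\mathrm{fin}}_{\mathrm{Learn}}\mathbf{PL}$ and $\mathbf{Ex}<_{\mathrm{Learn}}\mathbf{PL}$: a finite family of structures is $\mathbf{Ex}$-learnable iff it is $\mathbf{PL}$-learnable; every $\mathbf{Ex}$-learnable family is $\mathbf{PL}$-learnable, and some $\mathbf{PL}$-learnable family is not $\mathbf{Ex}$-learnable.
   Context: All structures are countable, have domain $\mathbb{N}$, are in a finite relational signature, and are identified with their atomic diagrams. A family of structures $\mathfrak{K}$ is a countable set of pairwise nonisomorphic such structures; $\mathcal{S}\restriction_s$ is the finite substructure on $\{0,\dots,s\}$; $\mathrm{LD}(\mathfrak{K})$ is the set of structures with domain $\mathbb{N}$ isomorphic to a member of $\mathfrak{K}$. A learner is an arbitrary function from $\{\mathcal{S}\restriction_s:\mathcal{S}\in\mathrm{LD}(\mathfrak{K})\}$ to $\{\ulcorner\mathcal{A}\urcorner:\mathcal{A}\in\mathfrak{K}\}\cup\{?\}$ (distinct formal symbols). $\mathfrak{K}$ is $\mathbf{Ex}$-learnable if some learner $\mathbf{M}$ satisfies: for every $\mathcal{S}\in\mathrm{LD}(\mathfrak{K})$, $\mathbf{M}(\mathcal{S}\restriction_n)$ is eventually constantly $\ulcorner\mathcal{A}\urcorner$ where $\mathcal{A}\in\mathfrak{K}$, $\mathcal{A}\cong\mathcal{S}$. $\mathfrak{K}$ is $\mathbf{PL}$-learnable if some learner $\mathbf{M}$ satisfies: for every $\mathcal{S}\in\mathrm{LD}(\mathfrak{K})$ and $\mathcal{A}\in\mathfrak{K}$,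 $\{n:\mathbf{M}(\mathcal{S}\restriction_n)=\ulcorner\mathcal{A}\urcorner\}$ is infinite iff $\mathcal{A}\cong\mathcal{S}$. For criteria $X,Y$: $X\leq_{\mathrm{Learn}}Y$ iff every $X$-learnable family is $Y$-learnable; $\leq^{\mathrm{fin}}_{\mathrm{Learn}}$ is the same restricted to finite families; $<$ means $\leq$ but not $\geq$; $\equiv$ means both. *)

theory Defs
  imports Main "HOL-Library.Countable_Set"
begin

text \<open>A finite relational signature is a list of arities: relation symbol i (i < length sig)
has arity sig ! i.  A structure with domain the naturals is identified with its atomic
diagram: for each symbol i the set of tuples (lists of naturals) in the relation.\<close>

type_synonym sig = "nat list"
type_synonym struct = "nat \<Rightarrow> nat list set"

definition wf_struct :: "sig \<Rightarrow> struct \<Rightarrow> bool" where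
  "wf_struct \<sigma> S \<longleftrightarrow> (\<forall>i xs. xs \<in> S i \<longrightarrow> i < length \<sigma> \<and> length xs = \<sigma> ! i)"

definition iso :: "sig \<Rightarrow> struct \<Rightarrow> struct \<Rightarrow> bool" where
  "iso \<sigma> A B \<longleftrightarrow> (\<exists>f::nat \<Rightarrow> nat. bij f \<and>
     (\<forall>i < length \<sigma>. \<forall>xs. length xs = \<sigma> ! i \<longrightarrow> (xs \<in> A i \<longleftrightarrow> map f xs \<in> B i)))"

definition family :: "sig \<Rightarrow> struct set \<Rightarrow> bool" where
  "family \<sigma> K \<longleftrightarrow> countable K \<and> (\<forall>A\<in>K. wf_struct \<sigma> A) \<and>
     (\<forall>A\<in>K. \<forall>B\<in>K. iso \<sigma> A B \<longrightarrow> A = B)"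

definition LD :: "sig \<Rightarrow> struct set \<Rightarrow> struct set" where
  "LD \<sigma> K = {S. wf_struct \<sigma> S \<and> (\<exists>A\<in>K. iso \<sigma> S A)}"

text \<open>The finite substructure on {0,...,s}, represented by s together with its atomic diagram.\<close>
definition restr :: "struct \<Rightarrow> nat \<Rightarrow> nat \<times> struct" where
  "restr S s = (s, \<lambda>i. {xs \<in> S i. \<forall>x\<in>set xs. x \<le> s})"

text \<open>A learner maps finite substructures to a conjecture: Some A (the index of A \<in> K) or
None (the symbol ?).  Only its values on restrictions of members of LD(K) matter.\<close>
type_synonym learner = "nat \<times> struct \<Rightarrow> struct option"

definition is_learner :: "struct set \<Rightarrow> learner \<Rightarrow> bool" where
  "is_learner K M \<longleftrightarrow> (\<forall>x. M x \<in> insert None (Some ` K))"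

definition Ex_learns :: "sig \<Rightarrow> struct set \<Rightarrow> learner \<Rightarrow> bool" where
  "Ex_learns \<sigma> K M \<longleftrightarrow> (\<forall>S\<in>LD \<sigma> K. \<exists>A\<in>K. iso \<sigma> A S \<and>
      (\<exists>n0. \<forall>n\<ge>n0. M (restr S n) = Some A))"

definition PL_learns :: "sig \<Rightarrow> struct set \<Rightarrow> learner \<Rightarrow> bool" where
  "PL_learns \<sigma> K M \<longleftrightarrow> (\<forall>S\<in>LD \<sigma> K. \<forall>A\<in>K.
      infinite {n. M (restr S n) = Some A} \<longleftrightarrow> iso \<sigma> A S)"

definition Ex_learnable :: "sig \<Rightarrow> struct set \<Rightarrow> bool" where
  "Ex_learnable \<sigma> K \<longleftrightarrow> (\<exists>M. is_learner K M \<and> Ex_learns \<sigma> K M)"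

definition PL_learnable :: "sig \<Rightarrow> struct set \<Rightarrow> bool" where
  "PL_learnable \<sigma> K \<longleftrightarrow> (\<exists>M. is_learner K M \<and> PL_learns \<sigma> K M)"

end

theory Submission
  imports Defs
begin

text \<open>
An Ex-learner's limit conjecture is output cofinitely often and every other conjecture only
finitely often, so it is also a PL-learner. Conversely, a PL-learner for a finite family
outputs, on a copy of \<open>A\<close>, only \<open>A\<close> or \<open>?\<close> from some stage on, and outputs \<open>A\<close> infinitely
often; hence repeating its latest conjecture different from \<open>?\<close> converges to \<open>A\<close>.

The separating family consists of the unary structures whose predicate is \<open>{..<k}\<close>, for each
\<open>k\<close>, together with the one whose predicate is the set of even numbers; up to isomorphism these
are all unary predicates with infinite complement. It is PL-learnable: conjecture the infinite
member whenever the newest element satisfies the predicate, and the member of the current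
size otherwise. An Ex-learner, however, must on every finite predicate eventually leave the
infinite conjecture; adding a fresh large element each time it does so builds an infinite,
coinfinite predicate on which it leaves that conjecture infinitely often.
\<close>

section \<open>Isomorphism\<close>

lemma iso_refl: "iso \<sigma> A A"
  unfolding iso_def by (intro exI[of _ id]) simp

lemma iso_sym:
  assumes "iso \<sigma> A B"
  shows "iso \<sigma> B A"
proof -
  obtain f where f: "bij f"
    and AB: "\<forall>i < length \<sigma>. \<forall>xs. length xs = \<sigma> ! i \<longrightarrow> (xs \<in> A i \<longleftrightarrow> map f xs \<in> B i)"
    using assms unfolding iso_def by blast
  have "xs \<in> B i \<longleftrightarrow> map (inv f) xs \<in> A i" if "i < length \<sigma>" "length xs = \<sigma> ! i" for i xs
  proof -
    have "map f (map (inv f) xs) = xs"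
      using f by (simp add: bij_is_surj surj_f_inv_f map_idI)
    then show ?thesis using AB that by (metis length_map)
  qed
  then show ?thesis using bij_imp_bij_inv[OF f] unfolding iso_def by blast
qed

lemma iso_trans:
  assumes "iso \<sigma> A B" "iso \<sigma> B C"
  shows "iso \<sigma> A C"
proof -
  obtain f where f: "bij f"
    and AB: "\<forall>i < length \<sigma>. \<forall>xs. length xs = \<sigma> ! i \<longrightarrow> (xs \<in> A i \<longleftrightarrow> map f xs \<in> B i)"
    using assms(1) unfolding iso_def by blast
  obtain g where g: "bij g"
    and BC: "\<forall>i < length \<sigma>. \<forall>xs. length xs = \<sigma> ! i \<longrightarrow> (xs \<in> B i \<longleftrightarrow> map g xs \<in> C i)"
    using assms(2) unfolding iso_def by blast
  have "\<forall>i < length \<sigma>. \<forall>xs. length xs = \<sigma> ! i \<longrightarrow> (xs \<in> A i \<longleftrightarrow> map (g \<circ> f) xs \<in> C i)"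
    using AB BC by (metis length_map map_map)
  then show ?thesis using bij_comp[OF f g] unfolding iso_def by blast
qed

lemma family_iso_unique:
  assumes "family \<sigma> K" "A \<in> K" "B \<in> K" "iso \<sigma> A S" "iso \<sigma> B S"
  shows "A = B"
  using assms unfolding family_def by (meson iso_sym iso_trans)

section \<open>Ex-learning and PL-learning\<close>

lemma Ex_learns_imp_PL_learns:
  assumes K: "family \<sigma> K" and M: "Ex_learns \<sigma> K M"
  shows "PL_learns \<sigma> K M"
  unfolding PL_learns_def
proof (intro ballI)
  fix S B assume S: "S \<in> LD \<sigma> K" and B: "B \<in> K"
  obtain A n0 where A: "A \<in> K" "iso \<sigma> A S" and conv: "\<forall>n\<ge>n0. M (restr S n) = Some A"
    using M S unfolding Ex_learns_def by blast
  show "infinite {n. M (restr S n) = Some B} \<longleftrightarrow> iso \<sigma> B S"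
  proof (cases "B = A")
    case True
    then have "{n0..} \<subseteq> {n. M (restr S n) = Some B}" using conv by auto
    then show ?thesis using True A(2) infinite_Ici finite_subset by blast
  next
    case False
    then have "{n. M (restr S n) = Some B} \<subseteq> {..<n0}" using conv by (auto simp: not_less)
    moreover have "\<not> iso \<sigma> B S" using family_iso_unique[OF K A(1) B] A(2) False by metis
    ultimately show ?thesis using finite_subset by blast
  qed
qed

lemma fst_restr [simp]: "fst (restr S n) = n"
  by (simp add: restr_def)

lemma restr_restr: "m \<le> n \<Longrightarrow> restr (snd (restr S n)) m = restr S m"
  unfolding restr_def by (auto simp: fun_eq_iff)

text \<open>On a restriction \<open>p\<close> of \<open>S\<close> to \<open>{0..fst p}\<close>, \<open>restr (snd p) m\<close> is the restriction of \<open>S\<close>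
  to \<open>{0..m}\<close> for \<open>m \<le> fst p\<close> (lemma \<open>restr_restr\<close>), so a learner may consult its earlier stages.\<close>

definition latest_guess :: "learner \<Rightarrow> learner" where
  "latest_guess M p =
     (let G = {m. m \<le> fst p \<and> M (restr (snd p) m) \<noteq> None}
      in if G = {} then None else M (restr (snd p) (Max G)))"

lemma is_learner_latest_guess: "is_learner K M \<Longrightarrow> is_learner K (latest_guess M)"
  unfolding is_learner_def latest_guess_def Let_def by (metis insertI1)

lemma latest_guess_restr:
  assumes "m \<le> n" "M (restr S m) \<noteq> None"
  obtains k where "m \<le> k" "k \<le> n" "M (restr S k) \<noteq> None"
    "latest_guess M (restr S n) = M (restr S k)"
proof -
  define G where "G = {k. k \<le> n \<and> M (restr S k) \<noteq> None}"
  have G: "{k. k \<le> fst (restr S n) \<and> M (restr (snd (restr S n)) k) \<noteq> None} = G"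
    unfolding G_def by (metis fst_restr restr_restr)
  have "finite G" "m \<in> G" using assms unfolding G_def by auto
  then have "m \<le> Max G" "Max G \<in> G" using Max_in by auto
  moreover have "latest_guess M (restr S n) = M (restr S (Max G))"
    using \<open>Max G \<in> G\<close> G unfolding latest_guess_def G_def by (auto simp: Let_def restr_restr)
  ultimately show ?thesis using that unfolding G_def by blast
qed

lemma PL_learns_eventually_None_or_target:
  assumes K: "family \<sigma> K" "finite K" and M: "is_learner K M" "PL_learns \<sigma> K M"
    and S: "S \<in> LD \<sigma> K" and A: "A \<in> K" "iso \<sigma> A S"
  obtains T where "\<forall>n\<ge>T. M (restr S n) \<in> {None, Some A}"
proof -
  have "{n. M (restr S n) \<notin> {None, Some A}} \<subseteq> (\<Union>B\<in>K-{A}. {n. M (restr S n) = Some B})"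
    using M(1) unfolding is_learner_def by blast
  moreover have "finite {n. M (restr S n) = Some B}" if "B \<in> K - {A}" for B
  proof -
    have "\<not> iso \<sigma> B S" using family_iso_unique[OF K(1)] A that by blast
    then show ?thesis using M(2) S that unfolding PL_learns_def by blast
  qed
  ultimately have "finite {n. M (restr S n) \<notin> {None, Some A}}"
    using K(2) by (meson finite_Diff finite_UN_I finite_subset)
  then obtain T where "{n. M (restr S n) \<notin> {None, Some A}} \<subseteq> {..<T}"
    using finite_nat_bounded by blast
  then have "\<forall>n\<ge>T. M (restr S n) \<in> {None, Some A}" by (auto simp: subset_eq)
  then show ?thesis using that by blast
qed

lemma PL_learns_imp_Ex_learns_latest_guess:
  assumes K: "family \<sigma> K" "finite K" and M: "is_learner K M" "PL_learns \<sigma> K M"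
  shows "Ex_learns \<sigma> K (latest_guess M)"
  unfolding Ex_learns_def
proof
  fix S assume S: "S \<in> LD \<sigma> K"
  then obtain A where A: "A \<in> K" "iso \<sigma> A S"
    unfolding LD_def using iso_sym by blast
  obtain T where T: "\<forall>n\<ge>T. M (restr S n) \<in> {None, Some A}"
    using PL_learns_eventually_None_or_target[OF K M S A] .
  have "infinite {n. M (restr S n) = Some A}" using M(2) S A unfolding PL_learns_def by blast
  then obtain n0 where n0: "n0 \<ge> T" "M (restr S n0) = Some A"
    unfolding infinite_nat_iff_unbounded_le by blast
  have "latest_guess M (restr S n) = Some A" if "n \<ge> n0" for n
  proof -
    obtain k where "n0 \<le> k" "M (restr S k) \<noteq> None" "latest_guess M (restr S n) = M (restr S k)"
      using latest_guess_restr[OF \<open>n \<ge> n0\<close>] n0(2) by (metis option.distinct(1))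
    moreover have "k \<ge> T" using \<open>n0 \<le> k\<close> n0(1) by linarith
    ultimately show ?thesis using T by auto
  qed
  then show "\<exists>A\<in>K. iso \<sigma> A S \<and> (\<exists>n0. \<forall>n\<ge>n0. latest_guess M (restr S n) = Some A)"
    using A by blast
qed

lemma Ex_learnable_imp_PL_learnable: "family \<sigma> K \<Longrightarrow> Ex_learnable \<sigma> K \<Longrightarrow> PL_learnable \<sigma> K"
  using Ex_learns_imp_PL_learns unfolding Ex_learnable_def PL_learnable_def by blast

theorem finite_family_Ex_learnable_iff_PL_learnable:
  assumes "family \<sigma> K" "finite K"
  shows "Ex_learnable \<sigma> K \<longleftrightarrow> PL_learnable \<sigma> K"
proof
  show "PL_learnable \<sigma> K" if "Ex_learnable \<sigma> K"
    using assms(1) that by (rule Ex_learnable_imp_PL_learnable)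
  assume "PL_learnable \<sigma> K"
  then obtain M where "is_learner K M" "PL_learns \<sigma> K M" unfolding PL_learnable_def by blast
  then show "Ex_learnable \<sigma> K"
    using assms is_learner_latest_guess PL_learns_imp_Ex_learns_latest_guess
    unfolding Ex_learnable_def by blast
qed

section \<open>Unary structures\<close>

lemma countable_ex_bij_betw:
  fixes X Y :: "'a::countable set"
  assumes "finite X \<longleftrightarrow> finite Y" "card X = card Y"
  shows "\<exists>g. bij_betw g X Y"
proof (cases "finite X")
  case True
  then show ?thesis using assms finite_same_card_bij by blast
next
  case False
  then have "bij_betw (from_nat_into Y \<circ> inv_into UNIV (from_nat_into X)) X Y"
    using assms by (metis bij_betw_from_nat_into bij_betw_inv_into bij_betw_trans countableI_type)
  then show ?thesis by blast
qed

lemma countable_ex_bij_image_iff: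
  fixes X Y :: "'a::countable set"
  assumes "infinite (- X)" "infinite (- Y)"
  shows "(\<exists>f. bij f \<and> f ` X = Y) \<longleftrightarrow> (finite X \<longleftrightarrow> finite Y) \<and> card X = card Y"
proof
  assume "\<exists>f. bij f \<and> f ` X = Y"
  then show "(finite X \<longleftrightarrow> finite Y) \<and> card X = card Y"
    by (metis bij_betw_finite bij_betw_same_card bij_betw_subset subset_UNIV)
next
  assume "(finite X \<longleftrightarrow> finite Y) \<and> card X = card Y"
  then obtain g where g: "bij_betw g X Y" using countable_ex_bij_betw by blast
  obtain h where h: "bij_betw h (- X) (- Y)" using countable_ex_bij_betw assms by (metis card.infinite)
  define f where "f x = (if x \<in> X then g x else h x)" for x
  have "bij_betw f X Y" using g by (simp add: f_def cong: bij_betw_cong)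
  moreover have "bij_betw f (- X) (- Y)"
    using h by (rule bij_betw_cong[THEN iffD1, rotated]) (simp add: f_def)
  ultimately have "bij_betw f (X \<union> - X) (Y \<union> - Y)" by (rule bij_betw_combine) simp
  then show "\<exists>f. bij f \<and> f ` X = Y"
    using \<open>bij_betw f X Y\<close> by (auto simp: bij_betw_def)
qed

definition unary :: "nat set \<Rightarrow> struct" where
  "unary X = (\<lambda>i. if i = 0 then (\<lambda>x. [x]) ` X else {})"

lemma inj_unary: "inj unary"
proof
  fix X Y assume "unary X = unary Y"
  then have "(\<lambda>x. [x]) ` X = (\<lambda>x. [x]) ` Y" unfolding unary_def by (metis (full_types))
  then show "X = Y" by (simp add: inj_image_eq_iff inj_def)
qed

lemma wf_struct_unary_iff: "wf_struct [1] S \<longleftrightarrow> (\<exists>X. S = unary X)"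
proof
  assume wf: "wf_struct [1] S"
  have "S = unary {x. [x] \<in> S 0}"
  proof
    fix i
    have "i = 0 \<and> (\<exists>x. xs = [x])" if "xs \<in> S i" for xs
    proof -
      have "i = 0" "length xs = Suc 0" using wf that unfolding wf_struct_def by fastforce+
      then show ?thesis by (simp add: length_Suc_conv)
    qed
    then show "S i = unary {x. [x] \<in> S 0} i" unfolding unary_def by auto
  qed
  then show "\<exists>X. S = unary X" ..
qed (auto simp: wf_struct_def unary_def split: if_splits)

lemma mem_unary_iff [simp]: "[x] \<in> unary X 0 \<longleftrightarrow> x \<in> X"
  by (auto simp: unary_def)

lemma all_singleton_lists: "(\<forall>xs. length xs = Suc 0 \<longrightarrow> P xs) \<longleftrightarrow> (\<forall>x. P [x])"
  by (auto simp: length_Suc_conv)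

lemma bij_image_eq_iff:
  assumes "bij f"
  shows "f ` X = Y \<longleftrightarrow> (\<forall>x. x \<in> X \<longleftrightarrow> f x \<in> Y)"
proof
  assume "f ` X = Y"
  then show "\<forall>x. x \<in> X \<longleftrightarrow> f x \<in> Y" using bij_is_inj[OF assms] by (auto dest: injD)
next
  assume XY: "\<forall>x. x \<in> X \<longleftrightarrow> f x \<in> Y"
  show "f ` X = Y"
  proof
    show "f ` X \<subseteq> Y" using XY by auto
    show "Y \<subseteq> f ` X"
    proof
      fix y assume "y \<in> Y"
      obtain x where "y = f x" using bij_pointE[OF assms] by metis
      then show "y \<in> f ` X" using XY \<open>y \<in> Y\<close> by auto
    qed
  qed
qed

lemma iso_unary_iff_bij_image: "iso [1] (unary X) (unary Y) \<longleftrightarrow> (\<exists>f. bij f \<and> f ` X = Y)"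
proof -
  have "(\<forall>i < length [1::nat]. \<forall>xs. length xs = [1::nat] ! i \<longrightarrow>
          (xs \<in> unary X i \<longleftrightarrow> map f xs \<in> unary Y i)) \<longleftrightarrow> (\<forall>x. x \<in> X \<longleftrightarrow> f x \<in> Y)" for f
    using all_singleton_lists[of "\<lambda>xs. xs \<in> unary X 0 \<longleftrightarrow> map f xs \<in> unary Y 0"] by simp
  then have "iso [1] (unary X) (unary Y) \<longleftrightarrow> (\<exists>f. bij f \<and> (\<forall>x. x \<in> X \<longleftrightarrow> f x \<in> Y))"
    unfolding iso_def by presburger
  also have "\<dots> \<longleftrightarrow> (\<exists>f. bij f \<and> f ` X = Y)" by (metis bij_image_eq_iff)
  finally show ?thesis .
qed

lemma iso_unary_iff:
  "infinite (- X) \<Longrightarrow> infinite (- Y) \<Longrightarrow>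
   iso [1] (unary X) (unary Y) \<longleftrightarrow> (finite X \<longleftrightarrow> finite Y) \<and> card X = card Y"
  unfolding iso_unary_iff_bij_image by (rule countable_ex_bij_image_iff)

lemma iso_unary_infinite_Compl:
  assumes "iso [1] (unary X) (unary Y)"
  shows "infinite (- X) \<longleftrightarrow> infinite (- Y)"
proof -
  obtain f where f: "bij f" "f ` X = Y" using assms unfolding iso_unary_iff_bij_image by blast
  then have "f ` (- X) = - Y" by (simp add: bij_image_Compl_eq)
  moreover have "inj_on f (- X)" using bij_is_inj[OF f(1)] by (rule inj_on_subset) simp
  ultimately show ?thesis by (metis finite_image_iff)
qed

lemma restr_unary: "restr (unary X) n = (n, unary (X \<inter> {..n}))"
proof -
  have "(\<lambda>i. {xs \<in> unary X i. \<forall>x\<in>set xs. x \<le> n}) = unary (X \<inter> {..n})"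
    by (rule ext) (auto simp: unary_def)
  then show ?thesis by (simp add: restr_def)
qed

section \<open>A PL-learnable family that is not Ex-learnable\<close>

definition evens :: "nat set" where
  "evens = {n. even n}"

definition fin_or_evens :: "struct set" where
  "fin_or_evens = insert (unary evens) (range (\<lambda>k. unary {..<k}))"

definition fin_or_evens_rep :: "nat set \<Rightarrow> struct" where
  "fin_or_evens_rep X = (if finite X then unary {..<card X} else unary evens)"

lemma infinite_evens: "infinite evens"
  unfolding evens_def infinite_nat_iff_unbounded_le by (metis dvd_triv_left le_add2 mem_Collect_eq mult_2)

lemma infinite_Compl_evens: "infinite (- evens)"
proof -
  have "- evens = Suc ` evens" unfolding evens_def by (auto simp: image_iff) presburger
  then show ?thesis using infinite_evens by (simp add: finite_image_iff)
qed

lemma unary_lessThan_ne_evens: "unary {..<k} \<noteq> unary evens"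
  using inj_unary infinite_evens by (metis finite_lessThan injD)

lemma fin_or_evens_cases:
  assumes "A \<in> fin_or_evens"
  obtains "A = unary evens" | k where "A = unary {..<k}"
  using assms unfolding fin_or_evens_def by blast

lemma fin_or_evens_rep_mem: "fin_or_evens_rep X \<in> fin_or_evens"
  unfolding fin_or_evens_rep_def fin_or_evens_def by simp

lemma iso_fin_or_evens_iff:
  assumes X: "infinite (- X)" and A: "A \<in> fin_or_evens"
  shows "iso [1] A (unary X) \<longleftrightarrow> A = fin_or_evens_rep X"
  using A
proof (cases rule: fin_or_evens_cases)
  case 1
  have "iso [1] A (unary X) \<longleftrightarrow> infinite X"
    unfolding 1 iso_unary_iff[OF infinite_Compl_evens X] using infinite_evens by auto
  also have "\<dots> \<longleftrightarrow> A = fin_or_evens_rep X"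
    using 1 unary_lessThan_ne_evens by (metis fin_or_evens_rep_def)
  finally show ?thesis .
next
  case (2 k)
  have "infinite (- {..<k})" by (simp add: infinite_Ici)
  then have "iso [1] A (unary X) \<longleftrightarrow> finite X \<and> card X = k"
    unfolding 2 iso_unary_iff[OF \<open>infinite (- {..<k})\<close> X] by auto
  also have "\<dots> \<longleftrightarrow> A = fin_or_evens_rep X"
    using 2 unary_lessThan_ne_evens inj_unary[THEN injD] by (auto simp: fin_or_evens_rep_def)
  finally show ?thesis .
qed

lemma fin_or_evens_members:
  assumes "A \<in> fin_or_evens"
  obtains Y where "A = unary Y" "infinite (- Y)"
  using assms
proof (cases rule: fin_or_evens_cases)
  case 1
  then show ?thesis using that infinite_Compl_evens by blast
next
  case (2 k)
  then show ?thesis using that[of "{..<k}"] by (simp add: infinite_Ici)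
qed

lemma family_fin_or_evens: "family [1] fin_or_evens"
  unfolding family_def
proof (intro conjI ballI impI)
  show "countable fin_or_evens" unfolding fin_or_evens_def by simp
next
  fix A assume "A \<in> fin_or_evens"
  then show "wf_struct [1] A" using wf_struct_unary_iff by (metis fin_or_evens_members)
next
  fix A B assume A: "A \<in> fin_or_evens" and B: "B \<in> fin_or_evens" and "iso [1] A B"
  obtain Y where Y: "B = unary Y" "infinite (- Y)" using B by (rule fin_or_evens_members)
  have "A = fin_or_evens_rep Y" using iso_fin_or_evens_iff Y A \<open>iso [1] A B\<close> by blast
  moreover have "B = fin_or_evens_rep Y" using iso_fin_or_evens_iff Y B iso_refl by blast
  ultimately show "A = B" by simp
qed

lemma LD_fin_or_evens_iff: "S \<in> LD [1] fin_or_evens \<longleftrightarrow> (\<exists>X. S = unary X \<and> infinite (- X))"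
proof
  assume "S \<in> LD [1] fin_or_evens"
  then have "wf_struct [1] S" "\<exists>A\<in>fin_or_evens. iso [1] S A" unfolding LD_def by auto
  then obtain X A where S: "S = unary X" and A: "A \<in> fin_or_evens" "iso [1] (unary X) A"
    using wf_struct_unary_iff by metis
  obtain Y where "A = unary Y" "infinite (- Y)" using A(1) by (rule fin_or_evens_members)
  then show "\<exists>X. S = unary X \<and> infinite (- X)" using S A(2) iso_unary_infinite_Compl by blast
next
  assume "\<exists>X. S = unary X \<and> infinite (- X)"
  then obtain X where "S = unary X" "infinite (- X)" by blast
  then show "S \<in> LD [1] fin_or_evens"
    using iso_fin_or_evens_iff[OF _ fin_or_evens_rep_mem] fin_or_evens_rep_mem iso_sym wf_struct_unary_iff
    unfolding LD_def by blast
qed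

definition fin_or_evens_learner :: learner where
  "fin_or_evens_learner p =
     (if [fst p] \<in> snd p 0 then Some (unary evens)
      else Some (unary {..<card {x. [x] \<in> snd p 0}}))"

lemma fin_or_evens_learner_restr_unary:
  "fin_or_evens_learner (restr (unary X) n) =
     (if n \<in> X then Some (unary evens) else Some (unary {..<card (X \<inter> {..n})}))"
proof -
  have "{x. [x] \<in> unary (X \<inter> {..n}) 0} = X \<inter> {..n}" "[n] \<in> unary (X \<inter> {..n}) 0 \<longleftrightarrow> n \<in> X"
    by (auto simp: unary_def)
  then show ?thesis by (simp add: fin_or_evens_learner_def restr_unary)
qed

lemma card_Int_atMost_unbounded:
  fixes X :: "nat set"
  assumes "infinite X"
  obtains n where "j < card (X \<inter> {..n})"
proof -
  obtain B where B: "finite B" "card B = Suc j" "B \<subseteq> X"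
    using infinite_arbitrarily_large assms by blast
  obtain n where "B \<subseteq> {..<n}" using finite_nat_bounded B(1) by blast
  then have "card B \<le> card (X \<inter> {..n})" using B(3) by (intro card_mono) auto
  then show ?thesis using that B(2) by (metis Suc_le_lessD)
qed

lemma infinite_card_Int_atMost_iff:
  fixes X :: "nat set"
  shows "infinite {n. n \<notin> X \<and> card (X \<inter> {..n}) = j} \<longleftrightarrow> finite X \<and> card X = j"
    (is "infinite ?Z \<longleftrightarrow> _")
proof
  assume Z: "infinite ?Z"
  have bounded: "card (X \<inter> {..m}) \<le> j" for m
  proof -
    obtain n where "n \<in> ?Z" "m \<le> n" using Z unfolding infinite_nat_iff_unbounded_le by blast
    moreover have "card (X \<inter> {..m}) \<le> card (X \<inter> {..n})" using \<open>m \<le> n\<close> by (intro card_mono) auto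
    ultimately show ?thesis by simp
  qed
  then have "finite X" using card_Int_atMost_unbounded not_le by metis
  then obtain b where "X \<subseteq> {..<b}" using finite_nat_bounded by blast
  moreover obtain n where n: "n \<in> ?Z" "b \<le> n" using Z unfolding infinite_nat_iff_unbounded_le by blast
  ultimately have "X \<inter> {..n} = X" by auto
  then have "card X = j" using n(1) by simp
  with \<open>finite X\<close> show "finite X \<and> card X = j" ..
next
  assume "finite X \<and> card X = j"
  then obtain b where b: "X \<subseteq> {..<b}" and "card X = j" using finite_nat_bounded by blast
  have "{b..} \<subseteq> ?Z"
  proof
    fix n assume "n \<in> {b..}"
    then have "X \<inter> {..n} = X" "n \<notin> X" using b by auto
    then show "n \<in> ?Z" using \<open>card X = j\<close> by simp
  qed
  then show "infinite ?Z" using infinite_Ici finite_subset by blast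
qed

lemma PL_learns_fin_or_evens: "PL_learns [1] fin_or_evens fin_or_evens_learner"
  unfolding PL_learns_def
proof (intro ballI)
  fix S A assume S: "S \<in> LD [1] fin_or_evens" and A: "A \<in> fin_or_evens"
  obtain X where X: "S = unary X" "infinite (- X)" using S LD_fin_or_evens_iff by blast
  have "infinite {n. fin_or_evens_learner (restr S n) = Some A} \<longleftrightarrow> A = fin_or_evens_rep X"
    using A
  proof (cases rule: fin_or_evens_cases)
    case 1
    then have "{n. fin_or_evens_learner (restr S n) = Some A} = X"
      using X(1) unary_lessThan_ne_evens by (auto simp: fin_or_evens_learner_restr_unary)
    then show ?thesis using 1 unary_lessThan_ne_evens by (metis fin_or_evens_rep_def)
  next
    case (2 k)
    then have "{n. fin_or_evens_learner (restr S n) = Some A} = {n. n \<notin> X \<and> card (X \<inter> {..n}) = k}"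
      using X(1) not_sym[OF unary_lessThan_ne_evens] inj_unary[THEN injD]
      by (auto simp: fin_or_evens_learner_restr_unary)
    then show ?thesis
      using 2 unary_lessThan_ne_evens inj_unary[THEN injD]
      by (auto simp: infinite_card_Int_atMost_iff fin_or_evens_rep_def)
  qed
  then show "infinite {n. fin_or_evens_learner (restr S n) = Some A} \<longleftrightarrow> iso [1] A S"
    using iso_fin_or_evens_iff[OF X(2) A] X(1) by simp
qed

lemma PL_learnable_fin_or_evens: "PL_learnable [1] fin_or_evens"
proof -
  have "is_learner fin_or_evens fin_or_evens_learner"
    unfolding is_learner_def fin_or_evens_learner_def fin_or_evens_def by auto
  then show ?thesis using PL_learns_fin_or_evens unfolding PL_learnable_def by blast
qed

lemma diagonal_set:
  fixes Q :: "nat set \<Rightarrow> nat \<Rightarrow> bool"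
  assumes "\<And>F n. finite F \<Longrightarrow> \<exists>m>n. Q F m"
  obtains X where "infinite X" "\<forall>n. \<exists>m>n. m \<notin> X \<and> Q (X \<inter> {..m}) m"
proof -
  define g where "g F n = (SOME m. n < m \<and> Q F m)" for F n
  have g: "n < g F n \<and> Q F (g F n)" if "finite F" for F n
    unfolding g_def by (rule someI_ex) (use assms[OF that] in blast)
  define stage where "stage = rec_nat ({}, 0) (\<lambda>_ (F, n). (insert (Suc (g F n)) F, Suc (g F n)))"
  define F where "F j = fst (stage j)" for j
  define N where "N j = snd (stage j)" for j
  define m where "m j = g (F j) (N j)" for j
  have F_Suc: "F (Suc j) = insert (Suc (m j)) (F j)" and N_Suc: "N (Suc j) = Suc (m j)" for j
    by (simp_all add: F_def N_def m_def stage_def split_beta)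
  have F_bounded: "finite (F j) \<and> F j \<subseteq> {..N j}" for j
  proof (induction j)
    case 0
    then show ?case by (simp add: F_def N_def stage_def)
  next
    case (Suc j)
    then show ?case using g[of "F j" "N j"] by (auto simp: F_Suc N_Suc m_def)
  qed
  then have m: "N j < m j \<and> Q (F j) (m j)" for j unfolding m_def using g by blast
  have "m j < m (Suc j)" for j using m[of "Suc j"] N_Suc[of j] by simp
  then have "strict_mono m" by (simp add: strict_mono_Suc_iff)
  have F_mono: "j \<le> k \<Longrightarrow> F j \<subseteq> F k" for j k
    by (rule lift_Suc_mono_le[of F]) (auto simp: F_Suc)
  \<comment> \<open>Later stages only add elements above \<open>m j\<close>, so they do not change \<open>F j\<close> below it.\<close>
  have F_cut: "F k \<inter> {..m j} = F j" if "j \<le> k" for j k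
    using that
  proof (induction k rule: dec_induct)
    case base
    then show ?case using F_bounded[of j] m[of j] by auto
  next
    case (step k)
    have "m j < Suc (m k)" using \<open>strict_mono m\<close> step(1) by (simp add: le_imp_less_Suc strict_mono_less_eq)
    then show ?case using step(3) by (auto simp: F_Suc)
  qed
  define X where "X = (\<Union>j. F j)"
  have X_cut: "X \<inter> {..m j} = F j" for j
  proof
    show "X \<inter> {..m j} \<subseteq> F j"
    proof
      fix x assume "x \<in> X \<inter> {..m j}"
      then obtain k where "x \<in> F k" "x \<le> m j" unfolding X_def by blast
      then have "x \<in> F (max j k) \<inter> {..m j}" using F_mono[of k "max j k"] by auto
      then show "x \<in> F j" using F_cut[of j "max j k"] by simp
    qed
    show "F j \<subseteq> X \<inter> {..m j}" unfolding X_def using F_cut[of j j] by auto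
  qed
  have "infinite X"
    unfolding infinite_nat_iff_unbounded_le
  proof
    fix l
    have "l \<le> Suc (m l)" using strict_mono_imp_increasing[OF \<open>strict_mono m\<close>, of l] by simp
    moreover have "Suc (m l) \<in> X" unfolding X_def using F_Suc by blast
    ultimately show "\<exists>x\<ge>l. x \<in> X" by blast
  qed
  moreover have "\<exists>m'>n. m' \<notin> X \<and> Q (X \<inter> {..m'}) m'" for n
  proof (intro exI conjI)
    show "n < m (Suc n)" using strict_mono_imp_increasing[OF \<open>strict_mono m\<close>, of "Suc n"] by simp
    show "m (Suc n) \<notin> X" using X_cut[of "Suc n"] F_bounded[of "Suc n"] m[of "Suc n"] by auto
    show "Q (X \<inter> {..m (Suc n)}) (m (Suc n))" using X_cut m by simp
  qed
  ultimately show ?thesis using that by blast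
qed

lemma Ex_learns_fin_or_evens_converges:
  assumes "Ex_learns [1] fin_or_evens M" "infinite (- X)"
  obtains n0 where "\<forall>n\<ge>n0. M (restr (unary X) n) = Some (fin_or_evens_rep X)"
proof -
  have "unary X \<in> LD [1] fin_or_evens" using assms(2) LD_fin_or_evens_iff by blast
  then obtain A n0 where "A \<in> fin_or_evens" "iso [1] A (unary X)"
    "\<forall>n\<ge>n0. M (restr (unary X) n) = Some A"
    using assms(1) unfolding Ex_learns_def by blast
  then show ?thesis using iso_fin_or_evens_iff[OF assms(2)] that by blast
qed

lemma not_Ex_learnable_fin_or_evens: "\<not> Ex_learnable [1] fin_or_evens"
proof
  assume "Ex_learnable [1] fin_or_evens"
  then obtain M where M: "Ex_learns [1] fin_or_evens M" unfolding Ex_learnable_def by blast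
  have "\<exists>m>n. M (restr (unary F) m) \<noteq> Some (unary evens)" if F: "finite F" for F n
  proof -
    have "infinite (- F)" using F by (simp add: Compl_eq_Diff_UNIV Diff_infinite_finite)
    then obtain n0 where "\<forall>n\<ge>n0. M (restr (unary F) n) = Some (unary {..<card F})"
      using Ex_learns_fin_or_evens_converges[OF M] F by (metis fin_or_evens_rep_def)
    then show ?thesis using unary_lessThan_ne_evens by (intro exI[of _ "max n0 (Suc n)"]) auto
  qed
  then obtain X where X: "infinite X" and diag: "\<forall>n. \<exists>m>n. m \<notin> X \<and>
      M (restr (unary (X \<inter> {..m})) m) \<noteq> Some (unary evens)"
    by (rule diagonal_set)
  have "infinite (- X)"
    unfolding infinite_nat_iff_unbounded_le
  proof
    fix l
    obtain m where "l < m" "m \<notin> X" using diag by blast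
    then show "\<exists>m\<ge>l. m \<in> - X" using less_imp_le by auto
  qed
  then obtain n0 where n0: "\<forall>n\<ge>n0. M (restr (unary X) n) = Some (unary evens)"
    using Ex_learns_fin_or_evens_converges[OF M \<open>infinite (- X)\<close>] X by (metis fin_or_evens_rep_def)
  obtain m where "m > n0" "M (restr (unary (X \<inter> {..m})) m) \<noteq> Some (unary evens)"
    using diag by blast
  moreover have "restr (unary (X \<inter> {..m})) m = restr (unary X) m" by (simp add: restr_unary Int_assoc)
  ultimately show False using n0 by simp
qed

theorem mainTheorem16:
  shows "(\<forall>\<sigma> K. family \<sigma> K \<and> finite K \<longrightarrow> (Ex_learnable \<sigma> K \<longleftrightarrow> PL_learnable \<sigma> K))
       \<and> (\<forall>\<sigma> K. family \<sigma> K \<longrightarrow> Ex_learnable \<sigma> K \<longrightarrow> PL_learnable \<sigma> K)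
       \<and> (\<exists>\<sigma> K. family \<sigma> K \<and> PL_learnable \<sigma> K \<and> \<not> Ex_learnable \<sigma> K)"
proof (intro conjI allI impI)
  show "Ex_learnable \<sigma> K \<longleftrightarrow> PL_learnable \<sigma> K" if "family \<sigma> K \<and> finite K" for \<sigma> K
    using that finite_family_Ex_learnable_iff_PL_learnable by blast
  show "PL_learnable \<sigma> K" if "family \<sigma> K" "Ex_learnable \<sigma> K" for \<sigma> K
    using that by (rule Ex_learnable_imp_PL_learnable)
  show "\<exists>\<sigma> K. family \<sigma> K \<and> PL_learnable \<sigma> K \<and> \<not> Ex_learnable \<sigma> K"
    using family_fin_or_evens PL_learnable_fin_or_evens not_Ex_learnable_fin_or_evens by blast
qed

end
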